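(* Let $I$ be a set. Let $T_1,T_2$ be nonempty $I$-colored binary plane trees and let $v$ be a vertex of $T_1$. Then the multiset $\mathsf{IF}(\nabla_v(T_1,T_2))$ of insertion factors of the insertion $\nabla_v(T_1,T_2)$ is the multiset union of $\mathsf{IF}(T_1)$ and $\mathsf{IF}(T_2)$.
   Context: A binary plane tree is a rooted tree in which each child of a vertex is designated as a left child or a right child, and no vertex has more than one left child or more than one right child; trees are considered up to isomorphism, and the empty tree $\varnothing$ is allowed. The left (right) subtree of a vertex is the subtree rooted at its left (right) child. A branch is a nonempty binary plane tree in which every vertex has at most one child. Let $\boxminus$ be a special symbol not a vertex of any tree. An $I$-coloring of a binary plane tree $T$ is a function $\chi\colon T\sqcup\{\boxminus\}\to I$ (here $T$ also denotes its vertex set); an $I$-colored binary plane tree is a binary plane tree together with an $I$-coloring. Insertion: for nonempty $I$-colored trees $T_1,T_2$ with colorings $\chi_1,\chi_2$ and a vertex $v$ of $T_1$, the tree $\nabla_v(T_1,T_2)$ is formed as follows: replace $v$ by a left edge, i.e. create a new vertex $v^*$ that takes the place of $v$ in $T_1$ (attached to $v$'s former parent on the same side), and make $v$ (with its subtrees) the left child of $v^*$; then attach $T_2$ as the right subtree of $v^*$. Its coloring $\chi$ satisfies $\chi(u)=\chi_1(u)$ for $u\in T_1\sqcup\{\boxminus\}$, $\chi(u')=\chi_2(u')$ for $u'\in T_2$, and $\chi(v^* )=\chi_2(\boxminus)$. Insertion factors: for a nonempty $I$-colored tree $T$, let $\Lambda_T$ consist of $\boxminus$ together with the vertices of $T$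 having two children. Define $\gamma\colon T\cup\{\boxminus\}\to\Lambda_T$ by: $\gamma(u)=u$ if $u\in\Lambda_T$; otherwise, if some vertex $w\in\Lambda_T\setminus\{\boxminus\}$ has $u$ in its right subtree, $\gamma(u)$ is the lowest (deepest) such $w$; otherwise $\gamma(u)=\boxminus$. For $v\in\Lambda_T$, the tree $T_v$ has vertex set $\gamma^{-1}(v)\setminus\{v\}$, where for $u,w$ in this set, $w$ is a left (resp. right) child of $u$ in $T_v$ iff $w$ lies in the left (resp. right) subtree of $u$ in $T$ and no element of $\gamma^{-1}(v)$ lies strictly between $u$ and $w$ on the path in $T$; each such vertex keeps its color from $T$, and $\boxminus$ in $T_v$ is given the color of $v$ in $T$ (the color of $\boxminus$ in $T$ if $v=\boxminus$). Each $T_v$ is an $I$-colored branch, and the multiset of the $T_v$ ($v\in\Lambda_T$), taken up to isomorphism of $I$-colored trees, is denoted $\mathsf{IF}(T)$. *)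

theory Defs
  imports "HOL-Library.Tree" "HOL-Library.Multiset" "HOL-Library.Sublist"
begin

text \<open>Binary plane trees up to isomorphism are represented by the datatype
  \<open>'a tree\<close> (Leaf = empty tree), vertex labels being the colours.
  An I-coloured binary plane tree is a pair (tree, colour of the special symbol).
  A vertex is addressed by its path from the root: False = go to the left child,
  True = go to the right child.\<close>

type_synonym 'a ctree = "'a tree \<times> 'a"

fun subtree_at :: "'a tree \<Rightarrow> bool list \<Rightarrow> 'a tree" where
  "subtree_at t [] = t"
| "subtree_at Leaf (_ # _) = Leaf"
| "subtree_at (Node l a r) (False # p) = subtree_at l p"
| "subtree_at (Node l a r) (True # p) = subtree_at r p"

fun positions :: "'a tree \<Rightarrow> bool list list" where
  "positions Leaf = []"
| "positions (Node l a r) = [] # map (Cons False) (positions l) @ map (Cons True) (positions r)"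

definition label_at :: "'a tree \<Rightarrow> bool list \<Rightarrow> 'a" where
  "label_at t p = (case subtree_at t p of Node _ a _ \<Rightarrow> a | Leaf \<Rightarrow> undefined)"

definition two_children :: "'a tree \<Rightarrow> bool list \<Rightarrow> bool" where
  "two_children t p \<longleftrightarrow> (case subtree_at t p of
      Node l _ r \<Rightarrow> l \<noteq> Leaf \<and> r \<noteq> Leaf | Leaf \<Rightarrow> False)"

fun upd_at :: "('a tree \<Rightarrow> 'a tree) \<Rightarrow> bool list \<Rightarrow> 'a tree \<Rightarrow> 'a tree" where
  "upd_at f [] t = f t"
| "upd_at f (_ # _) Leaf = Leaf"
| "upd_at f (False # p) (Node l a r) = Node (upd_at f p l) a r"
| "upd_at f (True # p) (Node l a r) = Node l a (upd_at f p r)"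

definition insertion :: "bool list \<Rightarrow> 'a ctree \<Rightarrow> 'a ctree \<Rightarrow> 'a ctree" where
  "insertion p T1 T2 = (upd_at (\<lambda>s. Node s (snd T2) (fst T2)) p (fst T1), snd T1)"

text \<open>Induced tree on a set of positions of t: the root is an element of minimal depth;
  the left (right) child of u is the topmost element lying in the left (right) subtree of u.\<close>
function induce :: "'a tree \<Rightarrow> bool list list \<Rightarrow> 'a tree" where
  "induce t ps = (if ps = [] then Leaf else
     (let r = hd (sort_key length ps) in
       Node (induce t [q\<leftarrow>ps. prefix (r @ [False]) q]) (label_at t r)
            (induce t [q\<leftarrow>ps. prefix (r @ [True]) q])))"
  by pat_completeness auto
termination
proof (relation "measure (\<lambda>(t, ps). length ps)")
  show "wf (measure (\<lambda>(t, ps). length ps))" by simp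
next
  fix t :: "'a tree" and ps :: "bool list list" and r
  assume ne: "ps \<noteq> []" and r: "r = hd (sort_key length ps)"
  have rin: "r \<in> set ps" using ne r
    by (metis hd_in_set length_0_conv length_sort set_sort)
  show "((t, [q\<leftarrow>ps. prefix (r @ [False]) q]), t, ps) \<in> measure (\<lambda>(t, ps). length ps)"
    using rin by (auto intro!: length_filter_less)
  show "((t, [q\<leftarrow>ps. prefix (r @ [True]) q]), t, ps) \<in> measure (\<lambda>(t, ps). length ps)"
    using rin by (auto intro!: length_filter_less)
qed

text \<open>The map \<open>\<gamma>\<close>: None stands for the special symbol.\<close>
definition gamma :: "'a tree \<Rightarrow> bool list \<Rightarrow> bool list option" where
  "gamma t u = (if two_children t u then Some u
     else if \<exists>w. two_children t w \<and> prefix (w @ [True]) u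
     then Some (THE w. two_children t w \<and> prefix (w @ [True]) u \<and>
                  (\<forall>w'. two_children t w' \<and> prefix (w' @ [True]) u \<longrightarrow> length w' \<le> length w))
     else None)"

text \<open>\<open>\<Lambda>_T\<close>, as a list without repetitions.\<close>
definition Lambda :: "'a tree \<Rightarrow> bool list option list" where
  "Lambda t = None # map Some (filter (two_children t) (positions t))"

definition factor :: "'a ctree \<Rightarrow> bool list option \<Rightarrow> 'a ctree" where
  "factor T v =
     (induce (fst T) [u\<leftarrow>positions (fst T). gamma (fst T) u = v \<and> v \<noteq> Some u],
      (case v of None \<Rightarrow> snd T | Some p \<Rightarrow> label_at (fst T) p))"

definition IF :: "'a ctree \<Rightarrow> 'a ctree multiset" where
  "IF T = image_mset (factor T) (mset (Lambda (fst T)))"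

end

theory Submission
  imports Defs
begin

text \<open>The positions of \<open>\<nabla>_v(T1,T2)\<close> fall into three kinds: positions of T1, pushed one left
  edge down below v; the new vertex at v; and the positions of T2, placed below the right
  child of v. Pushing down preserves the prefix order, the left/right child relation, colours
  and the two-children property, so \<open>\<gamma>\<close> of the insertion is \<open>\<gamma>\<close> of T1 transported; on the
  positions of T2 it is \<open>\<gamma>\<close> of T2 transported, except that the vertices sent to the special
  symbol of T2 are now sent to the new vertex, which carries the special colour of T2.
  Hence \<open>\<Lambda>\<close> of the insertion is the disjoint union of the transported \<open>\<Lambda>_T1\<close> and \<open>\<Lambda>_T2\<close>,
  and corresponding factors coincide because an induced tree on a chain of positions only
  depends on the prefix order, the child directions and the colours.\<close>

lemma subtree_at_Leaf [simp]: "subtree_at Leaf p = Leaf"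
  by (cases p) auto

lemma subtree_at_append: "subtree_at t (p @ q) = subtree_at (subtree_at t p) q"
  by (induction t p rule: subtree_at.induct) auto

lemma in_positions_iff: "p \<in> set (positions t) \<longleftrightarrow> subtree_at t p \<noteq> Leaf"
proof (induction t arbitrary: p)
  case Leaf
  then show ?case by simp
next
  case (Node l a r)
  show ?case
  proof (cases p)
    case (Cons d p')
    then show ?thesis using Node by (cases d) auto
  qed simp
qed

lemma distinct_positions: "distinct (positions t)"
  by (induction t) (auto simp: distinct_map)

lemma subtree_at_prefix_closed: "subtree_at t (p @ q) \<noteq> Leaf \<Longrightarrow> subtree_at t p \<noteq> Leaf"
  by (auto simp: subtree_at_append)

lemma two_childrenI:
  "subtree_at t (p @ [False]) \<noteq> Leaf \<Longrightarrow> subtree_at t (p @ [True]) \<noteq> Leaf \<Longrightarrow> two_children t p"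
  unfolding two_children_def subtree_at_append by (cases "subtree_at t p") auto

lemma prefix_length_antisym: "prefix a b \<Longrightarrow> length b \<le> length a \<Longrightarrow> a = b"
  unfolding prefix_def by auto

subsection \<open>The map \<open>\<gamma>\<close>\<close>

definition right_fork :: "'a tree \<Rightarrow> bool list \<Rightarrow> bool list \<Rightarrow> bool" where
  "right_fork t u w \<longleftrightarrow> two_children t w \<and> prefix (w @ [True]) u"

lemma gamma_two_children: "two_children t u \<Longrightarrow> gamma t u = Some u"
  by (simp add: gamma_def)

lemma gamma_eq_SomeI:
  assumes "\<not> two_children t u" "right_fork t u w" "\<forall>w'. right_fork t u w' \<longrightarrow> prefix w' w"
  shows "gamma t u = Some w"
proof -
  have "(THE w'. two_children t w' \<and> prefix (w' @ [True]) u \<and>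
          (\<forall>w''. two_children t w'' \<and> prefix (w'' @ [True]) u \<longrightarrow> length w'' \<le> length w')) = w"
  proof (rule the_equality)
    show "two_children t w \<and> prefix (w @ [True]) u \<and>
          (\<forall>w''. two_children t w'' \<and> prefix (w'' @ [True]) u \<longrightarrow> length w'' \<le> length w)"
      using assms(2,3) by (auto simp: right_fork_def prefix_length_le)
  next
    fix y assume y: "two_children t y \<and> prefix (y @ [True]) u \<and>
          (\<forall>w''. two_children t w'' \<and> prefix (w'' @ [True]) u \<longrightarrow> length w'' \<le> length y)"
    then have "prefix y w" using assms(3) by (auto simp: right_fork_def)
    moreover have "length w \<le> length y" using y assms(2) by (auto simp: right_fork_def)
    ultimately show "y = w" by (rule prefix_length_antisym)
  qed
  then show ?thesis using assms(1,2) by (auto simp: gamma_def right_fork_def)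
qed

lemma right_fork_prefix: "right_fork t u w \<Longrightarrow> prefix w u"
  by (auto simp: right_fork_def dest: prefix_snocD prefix_order.less_imp_le)

lemma lowest_right_fork_exists:
  assumes "right_fork t u w0"
  shows "\<exists>w. right_fork t u w \<and> (\<forall>w'. right_fork t u w' \<longrightarrow> prefix w' w)"
proof -
  define S where "S = {w. right_fork t u w}"
  have fin: "finite S"
    by (rule finite_subset[of _ "set (prefixes u)"]) (auto simp: S_def dest: right_fork_prefix)
  have "Max (length ` S) \<in> length ` S"
    using fin assms by (intro Max_in) (auto simp: S_def)
  then obtain w where w: "w \<in> S" "length w = Max (length ` S)" by auto
  have "prefix w' w" if "right_fork t u w'" for w'
  proof -
    have "length w' \<le> length w" using that w fin by (auto simp: S_def)
    moreover have "prefix w' u" "prefix w u" using that w by (auto simp: S_def dest: right_fork_prefix)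
    ultimately show ?thesis using prefix_length_prefix by blast
  qed
  then show ?thesis using w by (auto simp: S_def)
qed

lemma gamma_eq_Some_iff:
  assumes "\<not> two_children t u"
  shows "gamma t u = Some w \<longleftrightarrow> right_fork t u w \<and> (\<forall>w'. right_fork t u w' \<longrightarrow> prefix w' w)"
proof
  assume g: "gamma t u = Some w"
  have "\<exists>w. right_fork t u w" using g assms by (auto simp: gamma_def right_fork_def split: if_splits)
  then obtain w1 where w1: "right_fork t u w1" "\<forall>w'. right_fork t u w' \<longrightarrow> prefix w' w1"
    using lowest_right_fork_exists by blast
  then have "gamma t u = Some w1" using assms gamma_eq_SomeI by blast
  then show "right_fork t u w \<and> (\<forall>w'. right_fork t u w' \<longrightarrow> prefix w' w)" using g w1 by simp
qed (use assms gamma_eq_SomeI in blast)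

lemma gamma_eq_None_iff:
  assumes "\<not> two_children t u"
  shows "gamma t u = None \<longleftrightarrow> (\<forall>w. \<not> right_fork t u w)"
  using assms lowest_right_fork_exists[of t u] gamma_eq_SomeI[of t u]
  by (fastforce simp: gamma_def right_fork_def)

subsection \<open>Vertices of a factor\<close>

definition factor_vertices :: "'a tree \<Rightarrow> bool list option \<Rightarrow> bool list set" where
  "factor_vertices t x = {u \<in> set (positions t). gamma t u = x \<and> x \<noteq> Some u}"

lemma set_filter_factor_vertices:
  "set [u\<leftarrow>positions t. gamma t u = x \<and> x \<noteq> Some u] = factor_vertices t x"
  by (simp add: factor_vertices_def)

lemma factor_vertices_not_both_sides:
  assumes a: "c @ False # as \<in> factor_vertices t x" and b: "c @ True # bs \<in> factor_vertices t x"
  shows False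
proof -
  have "two_children t c"
  proof (rule two_childrenI)
    show "subtree_at t (c @ [False]) \<noteq> Leaf"
      using a subtree_at_prefix_closed[of t "c @ [False]" as]
      by (simp add: factor_vertices_def in_positions_iff)
    show "subtree_at t (c @ [True]) \<noteq> Leaf"
      using b subtree_at_prefix_closed[of t "c @ [True]" bs]
      by (simp add: factor_vertices_def in_positions_iff)
  qed
  then have fork_c: "right_fork t (c @ True # bs) c" by (simp add: right_fork_def)
  have b_gamma: "gamma t (c @ True # bs) = x" "x \<noteq> Some (c @ True # bs)"
    using b by (auto simp: factor_vertices_def)
  then have b_ntc: "\<not> two_children t (c @ True # bs)" by (auto dest: gamma_two_children)
  then obtain w where x: "x = Some w" and w: "right_fork t (c @ True # bs) w"
    "\<forall>w'. right_fork t (c @ True # bs) w' \<longrightarrow> prefix w' w"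
    using fork_c b_gamma(1) gamma_eq_None_iff gamma_eq_Some_iff by (cases x) blast+
  have a_gamma: "gamma t (c @ False # as) = Some w" "w \<noteq> c @ False # as"
    using a x by (auto simp: factor_vertices_def)
  then have "\<not> two_children t (c @ False # as)" by (auto dest: gamma_two_children)
  then have "prefix (w @ [True]) (c @ False # as)"
    using a_gamma(1) by (simp add: gamma_eq_Some_iff right_fork_def)
  moreover have "prefix (w @ [True]) (c @ True # bs)" using w(1) by (simp add: right_fork_def)
  moreover obtain z where "w = c @ z" using w(2) fork_c by (auto simp: prefix_def)
  ultimately show False by (cases z) auto
qed

lemma factor_vertices_chain:
  assumes "a \<in> factor_vertices t x" "b \<in> factor_vertices t x"
  shows "prefix a b \<or> prefix b a"
proof (rule ccontr)
  assume "\<not> ?thesis"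
  then have "a \<parallel> b" by (simp add: parallel_def)
  then obtain c d as e bs where "d \<noteq> e" "a = c @ d # as" "b = c @ e # bs"
    by (blast dest: parallel_decomp)
  then consider "a = c @ False # as" "b = c @ True # bs" | "a = c @ True # as" "b = c @ False # bs"
    by (cases d; cases e) auto
  then show False
    using assms factor_vertices_not_both_sides by cases blast+
qed

lemma hd_sort_key_min:
  assumes "xs \<noteq> []"
  shows "hd (sort_key f xs) \<in> set xs" "\<forall>x\<in>set xs. f (hd (sort_key f xs)) \<le> f x"
proof -
  have "sort_key f xs \<noteq> []" using assms by (metis length_0_conv length_sort)
  then obtain y ys where e: "sort_key f xs = y # ys" by (cases "sort_key f xs") auto
  have "set (sort_key f xs) = set xs" "sorted (map f (sort_key f xs))" by simp_all
  then show "hd (sort_key f xs) \<in> set xs" "\<forall>x\<in>set xs. f (hd (sort_key f xs)) \<le> f x"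
    using e by auto
qed

declare induce.simps [simp del]

lemma induce_transport:
  assumes "set qs = f ` set ps"
    and "\<forall>a\<in>set ps. \<forall>b\<in>set ps. prefix a b \<or> prefix b a"
    and "\<forall>a\<in>set ps. \<forall>b\<in>set ps. prefix a b \<longleftrightarrow> prefix (f a) (f b)"
    and "\<forall>a\<in>set ps. \<forall>b\<in>set ps. \<forall>d. prefix (a @ [d]) b \<longleftrightarrow> prefix (f a @ [d]) (f b)"
    and "\<forall>a\<in>set ps. label_at t' (f a) = label_at t a"
  shows "induce t' qs = induce t ps"
  using assms
proof (induction ps arbitrary: qs rule: length_induct)
  case (1 ps)
  show ?case
  proof (cases "ps = []")
    case True
    then show ?thesis using 1(2) by (simp add: induce.simps)
  next
    case False
    define r where "r = hd (sort_key length ps)"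
    have r: "r \<in> set ps" "\<forall>x\<in>set ps. length r \<le> length x"
      using hd_sort_key_min[OF False, of length] unfolding r_def by auto
    have qs_ne: "qs \<noteq> []" using 1(2) False by auto
    define r' where "r' = hd (sort_key length qs)"
    have r': "r' \<in> set qs" "\<forall>x\<in>set qs. length r' \<le> length x"
      using hd_sort_key_min[OF qs_ne, of length] unfolding r'_def by auto
    have r_least: "prefix r x" if "x \<in> set ps" for x
      using 1(3) r that prefix_length_antisym by blast
    have r'_eq: "r' = f r"
    proof -
      obtain a where a: "a \<in> set ps" "r' = f a" using r'(1) 1(2) by auto
      have "prefix (f r) r'" using r_least[OF a(1)] 1(4) r(1) a by blast
      moreover have "length r' \<le> length (f r)" using r'(2) 1(2) r(1) by auto
      ultimately show ?thesis using prefix_length_antisym by metis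
    qed
    have children: "induce t' [q\<leftarrow>qs. prefix (r' @ [d]) q] = induce t [q\<leftarrow>ps. prefix (r @ [d]) q]"
      for d
    proof (rule 1(1)[rule_format])
      show "length [q\<leftarrow>ps. prefix (r @ [d]) q] < length ps"
        using r(1) by (intro length_filter_less) (auto dest: prefix_length_le)
      show "set [q\<leftarrow>qs. prefix (r' @ [d]) q] = f ` set [q\<leftarrow>ps. prefix (r @ [d]) q]"
        using 1(2,5) r(1) unfolding r'_eq set_filter by auto
    qed (use 1(3-6) in auto)
    show ?thesis
      using children 1(6) r(1) False qs_ne
      by (subst (1 2) induce.simps) (simp add: r_def r'_def[symmetric] r'_eq Let_def)
  qed
qed

lemma distinct_Lambda: "distinct (Lambda t)"
  by (simp add: Lambda_def distinct_map distinct_positions inj_on_def)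

lemma IF_eq_image_mset_mset_set: "IF T = image_mset (factor T) (mset_set (set (Lambda (fst T))))"
  by (simp add: IF_def mset_set_set distinct_Lambda)

lemma image_mset_mset_set_Un_inj_images:
  assumes "finite A" "finite B" "inj_on g A" "inj_on h B" "g ` A \<inter> h ` B = {}"
  shows "image_mset F (mset_set (g ` A \<union> h ` B))
    = image_mset (F \<circ> g) (mset_set A) + image_mset (F \<circ> h) (mset_set B)"
  using assms by (simp add: mset_set_Union image_mset_mset_set[symmetric] multiset.map_comp)

subsection \<open>Positions of an insertion\<close>

definition push_down :: "bool list \<Rightarrow> bool list \<Rightarrow> bool list" where
  "push_down v u = (if prefix v u then v @ False # drop (length v) u else u)"

definition graft_vertex :: "bool list \<Rightarrow> bool list option \<Rightarrow> bool list" where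
  "graft_vertex v x = (case x of None \<Rightarrow> v | Some w \<Rightarrow> v @ True # w)"

lemma push_down_append [simp]: "push_down v (v @ q) = v @ False # q"
  by (simp add: push_down_def)

lemma push_down_not_prefix [simp]: "\<not> prefix v u \<Longrightarrow> push_down v u = u"
  by (simp add: push_down_def)

lemma prefix_append_iff_not_prefix: "\<not> prefix v a \<Longrightarrow> prefix a (v @ x) \<longleftrightarrow> prefix a v"
proof
  assume "\<not> prefix v a" "prefix a (v @ x)"
  then show "prefix a v" using prefix_same_cases[of a "v @ x" v] by auto
qed (auto simp: prefix_def)

lemma prefix_push_down_iff: "prefix (push_down v a) (push_down v b) \<longleftrightarrow> prefix a b"
proof (cases "prefix v a"; cases "prefix v b")
  assume "prefix v a" "prefix v b"
  then show ?thesis by (auto simp: prefix_def)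
next
  assume "prefix v a" "\<not> prefix v b"
  then show ?thesis by (auto simp: prefix_def)
next
  assume a: "\<not> prefix v a" and "prefix v b"
  then obtain b' where "b = v @ b'" by (auto simp: prefix_def)
  then show ?thesis
    by (simp only: push_down_append push_down_not_prefix[OF a] prefix_append_iff_not_prefix[OF a])
qed simp

lemma push_down_inj: "push_down v a = push_down v b \<Longrightarrow> a = b"
  by (metis prefix_order.antisym prefix_order.order_refl prefix_push_down_iff)

lemma prefix_snoc_push_down_iff:
  "prefix (push_down v a @ [d]) (push_down v b) \<longleftrightarrow> prefix (a @ [d]) b"
proof (cases "prefix v a"; cases "prefix v b")
  assume "prefix v a" "prefix v b"
  then show ?thesis by (auto simp: prefix_def)
next
  assume "prefix v a" "\<not> prefix v b"
  then show ?thesis by (auto simp: prefix_def)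
next
  assume a: "\<not> prefix v a" and "prefix v b"
  then obtain b' where b: "b = v @ b'" by (auto simp: prefix_def)
  show ?thesis
  proof (cases "v = a @ [d]")
    case True
    then show ?thesis by (simp only: b push_down_append push_down_not_prefix[OF a]) simp
  next
    case False
    then have ad: "\<not> prefix v (a @ [d])" using a by (simp add: prefix_snoc)
    then show ?thesis
      by (simp only: b push_down_append push_down_not_prefix[OF a]
          prefix_append_iff_not_prefix[OF ad])
  qed
qed simp

lemma push_down_neq: "push_down v u \<noteq> v"
  by (auto simp: push_down_def)

lemma not_prefix_right_push_down: "\<not> prefix (v @ True # q) (push_down v u)"
  by (cases "prefix v u") (auto simp: push_down_def prefix_def)

lemma push_down_neq_graft_vertex: "push_down v u \<noteq> graft_vertex v x"
  by (cases x)
    (simp_all add: graft_vertex_def push_down_neq, metis not_prefix_right_push_down prefix_order.refl)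

lemma graft_vertex_inj: "graft_vertex v x = graft_vertex v y \<Longrightarrow> x = y"
  by (cases x; cases y) (auto simp: graft_vertex_def)

lemma prefix_push_down_right_imp:
  assumes "prefix (push_down v w @ [True]) (v @ True # q)"
  shows "prefix (push_down v w) v"
proof (cases "prefix v w")
  case True
  then show ?thesis using assms by (auto simp: prefix_def)
next
  case False
  then have "prefix w (v @ True # q)" using assms by (auto dest: prefix_snocD prefix_order.less_imp_le)
  then show ?thesis using False prefix_append_iff_not_prefix[OF False, of "True # q"] by simp
qed

lemma position_cases:
  obtains u where "x = push_down v u" | "x = v" | q where "x = v @ True # q"
proof (cases "prefix v x")
  case True
  then obtain q where q: "x = v @ q" by (auto simp: prefix_def)
  show ?thesis
  proof (cases q)
    case (Cons d q')
    then show ?thesis using q that(1)[of "v @ q'"] that(3)[of q'] by (cases d) auto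
  qed (use q that(2) in simp)
next
  case False
  then show ?thesis using that push_down_not_prefix by metis
qed

subsection \<open>Subtrees of an insertion\<close>

definition root_shape :: "'a tree \<Rightarrow> (bool \<times> 'a \<times> bool) option" where
  "root_shape t = (case t of Leaf \<Rightarrow> None | Node l a r \<Rightarrow> Some (l = Leaf, a, r = Leaf))"

lemma root_shape_eqD:
  assumes "root_shape (subtree_at t p) = root_shape (subtree_at t' p')"
  shows "two_children t p = two_children t' p'" "label_at t p = label_at t' p'"
    "p \<in> set (positions t) \<longleftrightarrow> p' \<in> set (positions t')"
  using assms unfolding two_children_def label_at_def root_shape_def in_positions_iff
  by (cases "subtree_at t p"; cases "subtree_at t' p'"; auto)+

lemma upd_at_neq_Leaf: "subtree_at t p \<noteq> Leaf \<Longrightarrow> (\<forall>s. f s \<noteq> Leaf) \<Longrightarrow> upd_at f p t \<noteq> Leaf"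
  by (induction f p t rule: upd_at.induct) auto

lemma subtree_at_upd_at_append:
  "subtree_at t p \<noteq> Leaf \<Longrightarrow> subtree_at (upd_at f p t) (p @ q) = subtree_at (f (subtree_at t p)) q"
  by (induction f p t rule: upd_at.induct) auto

lemma root_shape_upd_at_off_path:
  assumes "\<not> prefix p u" "subtree_at t p \<noteq> Leaf" "\<forall>s. f s \<noteq> Leaf"
  shows "root_shape (subtree_at (upd_at f p t) u) = root_shape (subtree_at t u)"
  using assms
proof (induction u arbitrary: p t)
  case Nil
  then obtain d p' l a r where p: "p = d # p'" and t: "t = Node l a r"
    by (cases p; cases t) auto
  show ?case
  proof (cases d)
    case True
    then have "subtree_at r p' \<noteq> Leaf" using Nil(2) p t by simp
    then show ?thesis using upd_at_neq_Leaf[of r p' f] Nil(3) True p t by (auto simp: root_shape_def)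
  next
    case False
    then have "subtree_at l p' \<noteq> Leaf" using Nil(2) p t by simp
    then show ?thesis using upd_at_neq_Leaf[of l p' f] Nil(3) False p t by (auto simp: root_shape_def)
  qed
next
  case (Cons e u')
  then obtain d p' l a r where "p = d # p'" "t = Node l a r"
    by (cases p; cases t) auto
  then show ?case using Cons by (cases d; cases e) auto
qed

locale insertion_at =
  fixes v :: "bool list" and t1 t2 :: "'a tree" and c2 :: 'a
  assumes v_in_t1: "subtree_at t1 v \<noteq> Leaf" and t2_not_Leaf: "t2 \<noteq> Leaf"
begin

abbreviation ins :: "'a tree" where
  "ins \<equiv> upd_at (\<lambda>s. Node s c2 t2) v t1"

lemma root_shape_push_down:
  "root_shape (subtree_at ins (push_down v u)) = root_shape (subtree_at t1 u)"
proof (cases "prefix v u")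
  case True
  then obtain q where "u = v @ q" by (auto simp: prefix_def)
  then show ?thesis
    using subtree_at_upd_at_append[OF v_in_t1, of _ "False # q"] by (simp add: subtree_at_append)
next
  case False
  then show ?thesis using root_shape_upd_at_off_path[OF False v_in_t1] by simp
qed

lemma subtree_at_graft: "subtree_at ins (v @ True # q) = subtree_at t2 q"
  using subtree_at_upd_at_append[OF v_in_t1, of _ "True # q"] by simp

lemma subtree_at_v: "subtree_at ins v = Node (subtree_at t1 v) c2 t2"
  using subtree_at_upd_at_append[OF v_in_t1, of _ "[]"] by simp

lemmas push_down_simps = root_shape_eqD[OF root_shape_push_down]

lemma graft_simps:
  "two_children ins (v @ True # q) = two_children t2 q"
  "label_at ins (v @ True # q) = label_at t2 q"
  "v @ True # q \<in> set (positions ins) \<longleftrightarrow> q \<in> set (positions t2)"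
  unfolding two_children_def label_at_def in_positions_iff subtree_at_graft by simp_all

lemma new_vertex_simps: "two_children ins v" "label_at ins v = c2" "v \<in> set (positions ins)"
  unfolding two_children_def label_at_def in_positions_iff subtree_at_v
  using v_in_t1 t2_not_Leaf by simp_all

lemma right_fork_push_down_iff:
  "right_fork ins (push_down v u) w \<longleftrightarrow> (\<exists>w0. w = push_down v w0 \<and> right_fork t1 u w0)"
proof
  assume fork: "right_fork ins (push_down v u) w"
  show "\<exists>w0. w = push_down v w0 \<and> right_fork t1 u w0"
  proof (cases w rule: position_cases[of _ v])
    case (1 w0)
    then show ?thesis
      using fork by (auto simp: right_fork_def push_down_simps prefix_snoc_push_down_iff)
  qed (use fork not_prefix_right_push_down[of v "[]" u] in \<open>auto simp: right_fork_def prefix_def\<close>)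
qed (auto simp: right_fork_def push_down_simps prefix_snoc_push_down_iff)

lemma gamma_push_down: "gamma ins (push_down v u) = map_option (push_down v) (gamma t1 u)"
proof (cases "two_children t1 u")
  case True
  then show ?thesis by (simp add: gamma_two_children push_down_simps)
next
  case False
  then have ntc: "\<not> two_children ins (push_down v u)" by (simp add: push_down_simps)
  show ?thesis
  proof (cases "gamma t1 u")
    case None
    then have "gamma ins (push_down v u) = None"
      using False by (simp add: gamma_eq_None_iff[OF ntc] gamma_eq_None_iff right_fork_push_down_iff)
    then show ?thesis using None by simp
  next
    case (Some w)
    then have "right_fork t1 u w \<and> (\<forall>w'. right_fork t1 u w' \<longrightarrow> prefix w' w)"
      using False gamma_eq_Some_iff by blast
    then have "gamma ins (push_down v u) = Some (push_down v w)"
      by (auto simp: gamma_eq_Some_iff[OF ntc] right_fork_push_down_iff prefix_push_down_iff)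
    then show ?thesis using Some by simp
  qed
qed

lemma right_fork_graft_cases:
  assumes "right_fork ins (v @ True # q) w"
  shows "(\<exists>w0. w = v @ True # w0 \<and> right_fork t2 q w0) \<or> prefix w v"
proof (cases w rule: position_cases[of _ v])
  case (1 w0)
  then show ?thesis using assms prefix_push_down_right_imp[of v w0 q] by (simp add: right_fork_def)
qed (use assms in \<open>auto simp: right_fork_def graft_simps\<close>)

text \<open>The new vertex at v is the lowest right fork above every vertex of T2, so it takes
  over the role of the special symbol of T2.\<close>

lemma gamma_graft: "gamma ins (v @ True # q) = Some (graft_vertex v (gamma t2 q))"
proof (cases "two_children t2 q")
  case True
  then show ?thesis by (simp add: gamma_two_children graft_simps graft_vertex_def)
next
  case False
  then have ntc: "\<not> two_children ins (v @ True # q)" by (simp add: graft_simps)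
  let ?w = "graft_vertex v (gamma t2 q)"
  have "right_fork ins (v @ True # q) ?w"
  proof (cases "gamma t2 q")
    case None
    then show ?thesis by (simp add: graft_vertex_def right_fork_def new_vertex_simps)
  next
    case (Some w)
    then have "right_fork t2 q w" using False gamma_eq_Some_iff by blast
    then show ?thesis using Some by (simp add: graft_vertex_def right_fork_def graft_simps)
  qed
  moreover have "prefix w' ?w" if "right_fork ins (v @ True # q) w'" for w'
  proof (cases "gamma t2 q")
    case None
    then have "prefix w' v" using right_fork_graft_cases[OF that] False gamma_eq_None_iff by blast
    then show ?thesis using None by (simp add: graft_vertex_def)
  next
    case (Some w)
    then have "\<forall>w'. right_fork t2 q w' \<longrightarrow> prefix w' w" using False gamma_eq_Some_iff by blast
    then show ?thesis
      using right_fork_graft_cases[OF that] Some by (auto simp: graft_vertex_def prefix_def)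
  qed
  ultimately show ?thesis using ntc by (simp add: gamma_eq_Some_iff)
qed

lemma factor_vertices_push_down:
  "factor_vertices ins (map_option (push_down v) x) = push_down v ` factor_vertices t1 x"
proof (intro set_eqI iffI)
  fix u assume u: "u \<in> factor_vertices ins (map_option (push_down v) x)"
  then show "u \<in> push_down v ` factor_vertices t1 x"
  proof (cases u rule: position_cases[of _ v])
    case (1 u0)
    then have "u0 \<in> factor_vertices t1 x"
      using u by (cases x; cases "gamma t1 u0")
        (auto simp: factor_vertices_def push_down_simps gamma_push_down dest: push_down_inj)
    then show ?thesis using 1 by blast
  next
    case 2
    then show ?thesis using u push_down_neq[symmetric]
      by (cases x) (auto simp: factor_vertices_def gamma_two_children new_vertex_simps)
  next
    case (3 q)
    then show ?thesis using u push_down_neq_graft_vertex[symmetric]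
      by (cases x) (auto simp: factor_vertices_def gamma_graft)
  qed
qed (cases x; auto simp: factor_vertices_def push_down_simps gamma_push_down dest: push_down_inj)

lemma factor_vertices_graft:
  "factor_vertices ins (Some (graft_vertex v x)) = (\<lambda>q. v @ True # q) ` factor_vertices t2 x"
proof (intro set_eqI iffI)
  fix u assume u: "u \<in> factor_vertices ins (Some (graft_vertex v x))"
  then show "u \<in> (\<lambda>q. v @ True # q) ` factor_vertices t2 x"
  proof (cases u rule: position_cases[of _ v])
    case (1 u0)
    then show ?thesis using u push_down_neq_graft_vertex
      by (cases "gamma t1 u0") (auto simp: factor_vertices_def gamma_push_down)
  next
    case 2
    then show ?thesis using u by (auto simp: factor_vertices_def gamma_two_children new_vertex_simps)
  next
    case (3 q)
    then have q: "q \<in> set (positions t2)" "graft_vertex v (gamma t2 q) = graft_vertex v x"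
      "graft_vertex v x \<noteq> v @ True # q"
      using u by (auto simp: factor_vertices_def graft_simps gamma_graft)
    then have "gamma t2 q = x" using graft_vertex_inj by blast
    then have "q \<in> factor_vertices t2 x" using q by (auto simp: factor_vertices_def graft_vertex_def)
    then show ?thesis using 3 by blast
  qed
qed (cases x; auto simp: factor_vertices_def graft_simps gamma_graft graft_vertex_def)

lemma factor_push_down: "factor (ins, c1) (map_option (push_down v) x) = factor (t1, c1) x"
proof -
  have "induce ins [u\<leftarrow>positions ins. gamma ins u = map_option (push_down v) x \<and>
                                      map_option (push_down v) x \<noteq> Some u]
      = induce t1 [u\<leftarrow>positions t1. gamma t1 u = x \<and> x \<noteq> Some u]"
    by (rule induce_transport[where f = "push_down v"], unfold set_filter_factor_vertices)
      (auto simp: factor_vertices_push_down prefix_push_down_iff prefix_snoc_push_down_iff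
        push_down_simps factor_vertices_chain)
  moreover have "(case map_option (push_down v) x of None \<Rightarrow> c1 | Some p \<Rightarrow> label_at ins p)
      = (case x of None \<Rightarrow> c1 | Some p \<Rightarrow> label_at t1 p)"
    by (cases x) (auto simp: push_down_simps)
  ultimately show ?thesis unfolding factor_def fst_conv snd_conv by simp
qed

lemma factor_graft: "factor (ins, c1) (Some (graft_vertex v x)) = factor (t2, c2) x"
proof -
  have "induce ins [u\<leftarrow>positions ins. gamma ins u = Some (graft_vertex v x) \<and>
                                      Some (graft_vertex v x) \<noteq> Some u]
      = induce t2 [u\<leftarrow>positions t2. gamma t2 u = x \<and> x \<noteq> Some u]"
    by (rule induce_transport[where f = "\<lambda>q. v @ True # q"], unfold set_filter_factor_vertices)
      (auto simp: factor_vertices_graft graft_simps factor_vertices_chain)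
  moreover have "label_at ins (graft_vertex v x) = (case x of None \<Rightarrow> c2 | Some p \<Rightarrow> label_at t2 p)"
    by (cases x) (auto simp: graft_simps new_vertex_simps graft_vertex_def)
  ultimately show ?thesis unfolding factor_def fst_conv snd_conv by simp
qed

lemma set_Lambda_ins:
  "set (Lambda ins) =
    map_option (push_down v) ` set (Lambda t1) \<union> (Some \<circ> graft_vertex v) ` set (Lambda t2)"
proof (intro set_eqI iffI)
  fix y assume y: "y \<in> set (Lambda ins)"
  show "y \<in> map_option (push_down v) ` set (Lambda t1) \<union>
             (Some \<circ> graft_vertex v) ` set (Lambda t2)"
  proof (cases y)
    case None
    then show ?thesis by (auto simp: Lambda_def intro: image_eqI[of None _ None])
  next
    case (Some p)
    then have p: "p \<in> set (positions ins)" "two_children ins p" using y by (auto simp: Lambda_def)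
    show ?thesis
    proof (cases p rule: position_cases[of _ v])
      case (1 u)
      then have "Some u \<in> set (Lambda t1)" using p by (auto simp: Lambda_def push_down_simps)
      moreover have "y = map_option (push_down v) (Some u)" using Some 1 by simp
      ultimately show ?thesis by blast
    next
      case 2
      have "y = Some (graft_vertex v None)" using Some 2 by (simp add: graft_vertex_def)
      then show ?thesis by (simp add: Lambda_def)
    next
      case (3 q)
      then have "Some q \<in> set (Lambda t2)" using p by (auto simp: Lambda_def graft_simps)
      moreover have "y = Some (graft_vertex v (Some q))" using Some 3 by (simp add: graft_vertex_def)
      ultimately show ?thesis by (auto simp: image_iff)
    qed
  qed
qed (auto simp: Lambda_def push_down_simps graft_simps new_vertex_simps graft_vertex_def
    split: option.splits)

lemma IF_ins: "IF (ins, c1) = IF (t1, c1) + IF (t2, c2)"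
proof -
  have "inj_on (map_option (push_down v)) (set (Lambda t1))"
    by (rule inj_onI) (metis option.inj_map_strong push_down_inj)
  moreover have "inj_on (Some \<circ> graft_vertex v) (set (Lambda t2))"
    by (rule inj_onI) (simp add: graft_vertex_inj)
  moreover have
    "map_option (push_down v) ` set (Lambda t1) \<inter> (Some \<circ> graft_vertex v) ` set (Lambda t2) = {}"
    using push_down_neq_graft_vertex by (fastforce simp: Lambda_def)
  ultimately show ?thesis
    by (simp add: IF_eq_image_mset_mset_set set_Lambda_ins image_mset_mset_set_Un_inj_images
        comp_def factor_push_down factor_graft)
qed

end

theorem proposition3p1:
  fixes T1 T2 :: "'a ctree" and v :: "bool list"
  assumes "fst T1 \<noteq> Leaf" and "fst T2 \<noteq> Leaf" and "v \<in> set (positions (fst T1))"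
  shows "IF (insertion v T1 T2) = IF T1 + IF T2"
proof -
  obtain t1 c1 t2 c2 where T: "T1 = (t1, c1)" "T2 = (t2, c2)" by fastforce
  interpret insertion_at v t1 t2 c2
    using assms by unfold_locales (simp_all add: T in_positions_iff)
  show ?thesis by (simp add: T insertion_def IF_ins)
qed

end
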